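(* Let $c_1>0$ and let $b:[0,c_1]\to\mathbb R$ be Lipschitz continuous with $b(0)=1$. Let $c<d$. Then there is a constant $C_2>0$ such that for all $R>|c|+|d|$ and all $f\in C^{1/2}_c(c,d)$, $$\Big\|\sup_{a\in[0,c_1]}|L_af|\Big\|_{L^\infty[-R,R]}\le C_2(1+|d-c|)R^{1/2}\|f\|_{C^{1/2}_c(c,d)}.$$
   Context: For $a>0$ and $f\in L^1(\mathbb R)$, $L_af(u)=\frac{1}{\sqrt{2\pi}}\frac{e^{i\pi/4}}{\sqrt{2a}}\int_{\mathbb R}f(t)e^{-i\frac{(b(a)u-t)^2}{4a}}dt$, and $L_0f(u)=f(b(0)u)=f(u)$; for Schwartz $f$ this equals $\frac1{\sqrt{2\pi}}\int_{\mathbb R}e^{i[b(a)uv+av^2]}\hat f(v)dv$ with $\hat f(v)=\frac1{\sqrt{2\pi}}\int e^{-ivt}f(t)dt$. $C^{s}_c(c,d)$ denotes the space of (complex-valued) functions on $\mathbb R$ supported in $(c,d)$ which are Hölder continuous of exponent $s$, with norm $\|f\|_{C^s_c(c,d)}=\sup|f|+\sup_{x\ne y}\frac{|f(x)-f(y)|}{|x-y|^s}$. *)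

theory Defs
  imports "HOL-Analysis.Analysis" "HOL-Probability.Essential_Supremum"
begin

definition L_op :: "(real \<Rightarrow> real) \<Rightarrow> real \<Rightarrow> (real \<Rightarrow> complex) \<Rightarrow> real \<Rightarrow> complex" where
  "L_op b a f u =
     (if a = 0 then f (b 0 * u)
      else complex_of_real (1 / sqrt (2 * pi)) * cis (pi / 4) / complex_of_real (sqrt (2 * a))
           * (LINT t|lborel. f t * cis (- ((b a * u - t)\<^sup>2 / (4 * a)))))"

definition holder_c :: "real \<Rightarrow> real \<Rightarrow> real \<Rightarrow> (real \<Rightarrow> complex) \<Rightarrow> bool" where
  "holder_c s c d f \<longleftrightarrow>
     (\<forall>x. x \<notin> {c<..<d} \<longrightarrow> f x = 0) \<and>
     (\<exists>K. \<forall>x y. cmod (f x - f y) \<le> K * \<bar>x - y\<bar> powr s)"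

definition holder_norm :: "real \<Rightarrow> (real \<Rightarrow> complex) \<Rightarrow> real" where
  "holder_norm s f =
     (SUP x. cmod (f x)) +
     (SUP p \<in> {p::real\<times>real. fst p \<noteq> snd p}.
        cmod (f (fst p) - f (snd p)) / \<bar>fst p - snd p\<bar> powr s)"

end

theory Submission
  imports Defs
begin

text \<open>Centred at \<open>x = b(a) u\<close>, the integral defining \<open>L_a f(u)\<close> splits into two one-sided
  integrals \<open>\<integral>_0^L g(s) e^(-i s^2/4a) ds\<close>, where \<open>g\<close> is Hoelder continuous of exponent 1/2 and
  vanishes beyond \<open>L = |c - x| + |d - x|\<close>. With \<open>r^2 = 4\<pi>a\<close>, the substitution
  \<open>s \<mapsto> \<surd>(s^2 + r^2)\<close> shifts the phase by \<open>\<pi>\<close>, i.e. reverses the sign of the chirp. Averaging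
  the integral with its substituted form leaves the integral over \<open>[0, r]\<close> plus an integrand
  controlled by the Hoelder constant, in total \<open>O(r [g]_1/2 \<surd>L)\<close>. The prefactor of \<open>L_a\<close> has
  modulus \<open>1/r\<close>, so \<open>|L_a f(u)| \<le> 6 [f]_1/2 \<surd>L\<close> uniformly in \<open>a\<close>; finally \<open>L = O(R)\<close> because
  the Lipschitz function \<open>b\<close> is bounded on \<open>[0, c1]\<close>.\<close>

lemma holder_const_nonneg:
  fixes g :: "real \<Rightarrow> 'a::real_normed_vector"
  assumes "\<And>x y. norm (g x - g y) \<le> H * \<bar>x - y\<bar> powr s"
  shows "0 \<le> H"
proof -
  have "norm (g 1 - g 0) \<le> H" using assms[of 1 0] by simp
  then show ?thesis using norm_ge_zero order_trans by blast
qed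

lemma holder_continuous:
  fixes g :: "real \<Rightarrow> 'a::real_normed_vector"
  assumes "s > 0" and "\<And>x y. norm (g x - g y) \<le> H * \<bar>x - y\<bar> powr s"
  shows "continuous_on UNIV g"
proof -
  have "(g \<longlongrightarrow> g x) (at x)" for x
  proof -
    have "((\<lambda>y. H * \<bar>y - x\<bar> powr s) \<longlongrightarrow> H * \<bar>x - x\<bar> powr s) (at x)"
      using assms(1) by (intro tendsto_intros) auto
    then have "((\<lambda>y. H * \<bar>y - x\<bar> powr s) \<longlongrightarrow> 0) (at x)" by simp
    then have "((\<lambda>y. g y - g x) \<longlongrightarrow> 0) (at x)"
      by (rule Lim_null_comparison[rotated]) (use assms(2) in auto)
    then show ?thesis by (simp add: LIM_zero_iff)
  qed
  then show ?thesis by (simp add: continuous_on_eq_continuous_at isCont_def)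
qed

lemma hypot_minus_le:
  fixes s r :: real
  assumes "0 \<le> s" "0 < r"
  shows "sqrt (s\<^sup>2 + r\<^sup>2) - s \<le> r\<^sup>2 / (s + r)"
proof -
  let ?\<rho> = "sqrt (s\<^sup>2 + r\<^sup>2)"
  have "s \<le> ?\<rho>" "r \<le> ?\<rho>" by (auto intro: real_le_rsqrt)
  then have "(?\<rho> - s) * (s + r) \<le> (?\<rho> - s) * (?\<rho> + s)"
    by (intro mult_left_mono) auto
  also have "\<dots> = r\<^sup>2" by (simp add: algebra_simps power2_eq_square[symmetric])
  finally show ?thesis using assms by (simp add: pos_le_divide_eq)
qed

lemma one_minus_div_hypot_le:
  fixes s r :: real
  assumes "0 \<le> s" "0 < r"
  shows "1 - s / sqrt (s\<^sup>2 + r\<^sup>2) \<le> 2 * r\<^sup>2 / (s + r)\<^sup>2"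
proof -
  let ?\<rho> = "sqrt (s\<^sup>2 + r\<^sup>2)"
  have \<rho>: "s \<le> ?\<rho>" "r \<le> ?\<rho>" by (auto intro: real_le_rsqrt)
  have "(s + r)\<^sup>2 \<le> 2 * ?\<rho>\<^sup>2"
    using sum_squares_ge_zero[of "s - r" 0] by (simp add: power2_eq_square algebra_simps)
  also have "\<dots> \<le> 2 * ?\<rho> * (?\<rho> + s)"
    using assms by (simp add: power2_eq_square algebra_simps)
  finally have "(?\<rho> - s) * (s + r)\<^sup>2 \<le> (?\<rho> - s) * (2 * ?\<rho> * (?\<rho> + s))"
    using \<rho> by (intro mult_left_mono) auto
  also have "\<dots> = 2 * ?\<rho> * r\<^sup>2" by (simp add: algebra_simps power2_eq_square[symmetric])
  finally have "(?\<rho> - s) * (s + r)\<^sup>2 \<le> 2 * ?\<rho> * r\<^sup>2" .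
  moreover have "0 < ?\<rho>" "0 < s + r" using \<rho> assms by linarith+
  ultimately have "(?\<rho> - s) / ?\<rho> \<le> 2 * r\<^sup>2 / (s + r)\<^sup>2"
    by (simp add: divide_le_eq le_divide_eq mult.commute mult.left_commute)
  moreover have "(?\<rho> - s) / ?\<rho> = 1 - s / ?\<rho>" using \<open>0 < ?\<rho>\<close> by (metis diff_divide_distrib divide_self less_irrefl)
  ultimately show ?thesis by simp
qed

lemma inverse_sqrt_plus_inverse_square_integral:
  fixes r L \<alpha> \<beta> :: real
  assumes "0 < r" "0 \<le> L"
  shows "((\<lambda>s. \<alpha> / sqrt (s + r) + \<beta> / (s + r)\<^sup>2) has_integral
           2 * \<alpha> * (sqrt (L + r) - sqrt r) + \<beta> * (1 / r - 1 / (L + r))) {0..L}"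
proof -
  have "((\<lambda>s. \<alpha> / sqrt (s + r) + \<beta> / (s + r)\<^sup>2) has_integral
          (2 * \<alpha> * sqrt (L + r) - \<beta> / (L + r)) - (2 * \<alpha> * sqrt (0 + r) - \<beta> / (0 + r))) {0..L}"
  proof (rule fundamental_theorem_of_calculus[OF assms(2)])
    fix s assume "s \<in> {0..L}"
    then have "0 < s + r" using assms by auto
    then show "((\<lambda>s. 2 * \<alpha> * sqrt (s + r) - \<beta> / (s + r)) has_vector_derivative
                 \<alpha> / sqrt (s + r) + \<beta> / (s + r)\<^sup>2) (at s within {0..L})"
      by (auto intro!: derivative_eq_intros simp flip: has_real_derivative_iff_has_vector_derivative
               simp: field_simps power2_eq_square)
  qed
  then show ?thesis by (simp add: algebra_simps)
qed

definition chirp :: "real \<Rightarrow> real \<Rightarrow> complex" where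
  "chirp a s = cis (- (s\<^sup>2 / (4 * a)))"

lemma continuous_on_chirp [continuous_intros]: "continuous_on A (chirp a)"
  unfolding chirp_def divide_inverse by (intro continuous_intros)

lemma norm_chirp [simp]: "norm (chirp a s) = 1"
  by (simp add: chirp_def)

lemma chirp_hypot:
  assumes "0 < a"
  shows "chirp a (sqrt (s\<^sup>2 + 4 * pi * a)) = - chirp a s"
proof -
  have "(sqrt (s\<^sup>2 + 4 * pi * a))\<^sup>2 / (4 * a) = s\<^sup>2 / (4 * a) + pi"
    using assms by (simp add: field_simps)
  then show ?thesis by (simp add: chirp_def cis.ctr complex_eq_iff)
qed

lemma integral_hypot_substitution:
  fixes h :: "real \<Rightarrow> 'a::euclidean_space"
  assumes "0 < r" "0 \<le> L" and "continuous_on {r..sqrt (L\<^sup>2 + r\<^sup>2)} h"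
  shows "integral {r..sqrt (L\<^sup>2 + r\<^sup>2)} h
           = integral {0..L} (\<lambda>s. (s / sqrt (s\<^sup>2 + r\<^sup>2)) *\<^sub>R h (sqrt (s\<^sup>2 + r\<^sup>2)))"
proof -
  have "((\<lambda>s. (s / sqrt (s\<^sup>2 + r\<^sup>2)) *\<^sub>R h (sqrt (s\<^sup>2 + r\<^sup>2))) has_integral
          integral {sqrt (0\<^sup>2 + r\<^sup>2)..sqrt (L\<^sup>2 + r\<^sup>2)} h) {0..L}"
  proof (rule has_integral_substitution[where c = r and d = "sqrt (L\<^sup>2 + r\<^sup>2)"
        and g = "\<lambda>s. sqrt (s\<^sup>2 + r\<^sup>2)" and g' = "\<lambda>s. s / sqrt (s\<^sup>2 + r\<^sup>2)"])
    show "0 \<le> L" "continuous_on {r..sqrt (L\<^sup>2 + r\<^sup>2)} h" by (fact assms)+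
    show "sqrt (0\<^sup>2 + r\<^sup>2) \<le> sqrt (L\<^sup>2 + r\<^sup>2)" by simp
    show "(\<lambda>s. sqrt (s\<^sup>2 + r\<^sup>2)) ` {0..L} \<subseteq> {r..sqrt (L\<^sup>2 + r\<^sup>2)}"
      using assms by (auto intro: real_le_rsqrt)
    fix s
    have "0 < s\<^sup>2 + r\<^sup>2" using assms by (intro add_nonneg_pos) auto
    then show "((\<lambda>s. sqrt (s\<^sup>2 + r\<^sup>2)) has_real_derivative s / sqrt (s\<^sup>2 + r\<^sup>2)) (at s within {0..L})"
      by (auto intro!: derivative_eq_intros simp: field_simps)
  qed
  then show ?thesis using assms(1) by (simp add: integral_unique)
qed

lemma chirp_integral_fold:
  fixes g :: "real \<Rightarrow> complex"
  assumes a: "0 < a" and L: "0 \<le> L" and g: "continuous_on UNIV g"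
    and g_vanish: "\<And>s. L \<le> s \<Longrightarrow> g s = 0"
  defines "r \<equiv> sqrt (4 * pi * a)"
  shows "2 * integral {0..L} (\<lambda>s. g s * chirp a s)
           = integral {0..r} (\<lambda>s. g s * chirp a s)
             + integral {0..L} (\<lambda>s. (g s - of_real (s / sqrt (s\<^sup>2 + r\<^sup>2)) * g (sqrt (s\<^sup>2 + r\<^sup>2)))
                                    * chirp a s)"
proof -
  define h where "h s = g s * chirp a s" for s
  define \<rho> where "\<rho> s = sqrt (s\<^sup>2 + r\<^sup>2)" for s
  define k where "k s = of_real (s / \<rho> s) * g (\<rho> s) * chirp a s" for s
  have r: "0 < r" "r\<^sup>2 = 4 * pi * a" using a by (simp_all add: r_def)
  have \<rho>_ge: "s \<le> \<rho> s" "r \<le> \<rho> s" for s by (auto simp: \<rho>_def intro: real_le_rsqrt)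
  have h_cont: "continuous_on UNIV h" unfolding h_def by (intro continuous_intros g)
  have k_cont: "continuous_on UNIV k"
  proof -
    have \<rho>_cont: "continuous_on UNIV \<rho>" unfolding \<rho>_def by (intro continuous_intros)
    have "\<rho> s \<noteq> 0" for s using \<rho>_ge[of s] r by linarith
    then show ?thesis unfolding k_def
      by (intro continuous_intros \<rho>_cont continuous_on_compose2[OF g \<rho>_cont]) auto
  qed
  have h_int: "h integrable_on {p..q}" and k_int: "k integrable_on {p..q}" for p q
    by (auto intro!: integrable_continuous_real continuous_on_subset[OF h_cont]
                     continuous_on_subset[OF k_cont])
  have "integral {0..L} h = integral {0..\<rho> L} h"
  proof -
    have "integral {L..\<rho> L} h = 0"
      using integral_cong[of "{L..\<rho> L}" h "\<lambda>_. 0"] by (simp add: h_def g_vanish)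
    then show ?thesis
      using Henstock_Kurzweil_Integration.integral_combine[OF L \<rho>_ge(1) h_int] by simp
  qed
  also have "\<dots> = integral {0..r} h + integral {r..\<rho> L} h"
    using r \<rho>_ge by (intro Henstock_Kurzweil_Integration.integral_combine[symmetric] h_int) auto
  also have "integral {r..\<rho> L} h = - integral {0..L} k"
  proof -
    have "integral {r..\<rho> L} h = integral {0..L} (\<lambda>s. (s / \<rho> s) *\<^sub>R h (\<rho> s))"
      unfolding \<rho>_def by (rule integral_hypot_substitution[OF r(1) L continuous_on_subset[OF h_cont]]) auto
    also have "(\<lambda>s. (s / \<rho> s) *\<^sub>R h (\<rho> s)) = (\<lambda>s. - k s)"
      using chirp_hypot[OF a] by (auto simp: h_def k_def \<rho>_def r(2) scaleR_conv_of_real)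
    finally show ?thesis by (simp add: integral_neg k_int)
  qed
  finally have "integral {0..L} h = integral {0..r} h - integral {0..L} k" by simp
  moreover have "integral {0..L} (\<lambda>s. h s - k s) = integral {0..L} h - integral {0..L} k"
    by (rule integral_diff[OF h_int k_int])
  ultimately have "2 * integral {0..L} h = integral {0..r} h + integral {0..L} (\<lambda>s. h s - k s)"
    by simp
  moreover have "(\<lambda>s. h s - k s)
      = (\<lambda>s. (g s - of_real (s / sqrt (s\<^sup>2 + r\<^sup>2)) * g (sqrt (s\<^sup>2 + r\<^sup>2))) * chirp a s)"
    by (auto simp: h_def k_def \<rho>_def algebra_simps)
  ultimately show ?thesis by (simp add: h_def[abs_def])
qed

lemma norm_hypot_reflection_le:
  fixes g :: "real \<Rightarrow> complex"
  assumes s: "0 \<le> s" and r: "0 < r"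
    and holder: "\<And>x y. cmod (g x - g y) \<le> H * \<bar>x - y\<bar> powr (1/2)"
    and g_le: "\<And>t. 0 \<le> t \<Longrightarrow> cmod (g t) \<le> S"
  shows "cmod (g s - of_real (s / sqrt (s\<^sup>2 + r\<^sup>2)) * g (sqrt (s\<^sup>2 + r\<^sup>2)))
           \<le> H * r / sqrt (s + r) + 2 * S * r\<^sup>2 / (s + r)\<^sup>2"
proof -
  define \<rho> where "\<rho> = sqrt (s\<^sup>2 + r\<^sup>2)"
  have \<rho>: "s \<le> \<rho>" "r \<le> \<rho>" by (auto simp: \<rho>_def intro: real_le_rsqrt)
  have "g s - of_real (s / \<rho>) * g \<rho> = (g s - g \<rho>) + of_real (1 - s / \<rho>) * g \<rho>"
    by (simp add: algebra_simps)
  then have "cmod (g s - of_real (s / \<rho>) * g \<rho>) \<le> cmod (g s - g \<rho>) + \<bar>1 - s / \<rho>\<bar> * cmod (g \<rho>)"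
    by (metis norm_mult norm_of_real norm_triangle_ineq)
  also have "\<dots> \<le> H * (r / sqrt (s + r)) + 2 * r\<^sup>2 / (s + r)\<^sup>2 * S"
  proof (rule add_mono)
    have "cmod (g s - g \<rho>) \<le> H * sqrt (\<rho> - s)"
      using holder[of s \<rho>] \<rho>(1) by (simp add: powr_half_sqrt)
    also have "\<dots> \<le> H * sqrt (r\<^sup>2 / (s + r))"
      using hypot_minus_le[OF s r] holder_const_nonneg[OF holder]
      by (intro mult_left_mono) (auto simp: \<rho>_def)
    also have "\<dots> = H * (r / sqrt (s + r))" using r s by (simp add: real_sqrt_divide)
    finally show "cmod (g s - g \<rho>) \<le> H * (r / sqrt (s + r))" .
    have "0 \<le> 1 - s / \<rho>" using \<rho> r by (simp add: divide_le_eq_1)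
    then show "\<bar>1 - s / \<rho>\<bar> * cmod (g \<rho>) \<le> 2 * r\<^sup>2 / (s + r)\<^sup>2 * S"
      using one_minus_div_hypot_le[OF s r] g_le[of \<rho>] \<rho> s
      by (intro mult_mono) (auto simp: \<rho>_def)
  qed
  finally show ?thesis by (simp add: \<rho>_def algebra_simps)
qed

lemma norm_integral_hypot_reflection_le:
  fixes g :: "real \<Rightarrow> complex"
  assumes r: "0 < r" and L: "0 \<le> L"
    and holder: "\<And>x y. cmod (g x - g y) \<le> H * \<bar>x - y\<bar> powr (1/2)"
    and g_le: "\<And>t. 0 \<le> t \<Longrightarrow> cmod (g t) \<le> S"
  shows "cmod (integral {0..L}
            (\<lambda>s. (g s - of_real (s / sqrt (s\<^sup>2 + r\<^sup>2)) * g (sqrt (s\<^sup>2 + r\<^sup>2))) * chirp a s))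
           \<le> 2 * H * r * sqrt L + 2 * S * r"
proof -
  define \<rho> where "\<rho> s = sqrt (s\<^sup>2 + r\<^sup>2)" for s
  define D where "D s = (g s - of_real (s / \<rho> s) * g (\<rho> s)) * chirp a s" for s
  have H: "0 \<le> H" by (rule holder_const_nonneg[OF holder])
  have S: "0 \<le> S" using g_le[of 0] norm_ge_zero order_trans by blast
  have D_int: "D integrable_on {0..L}"
  proof -
    have g_cont: "continuous_on UNIV g" by (rule holder_continuous[OF _ holder]) simp
    have \<rho>_cont: "continuous_on UNIV \<rho>" unfolding \<rho>_def by (intro continuous_intros)
    have "\<rho> s \<noteq> 0" for s using r real_le_rsqrt[of r "s\<^sup>2 + r\<^sup>2"] by (auto simp: \<rho>_def)
    then have "continuous_on UNIV D" unfolding D_def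
      by (intro continuous_intros g_cont \<rho>_cont continuous_on_compose2[OF g_cont \<rho>_cont]) auto
    then show ?thesis by (auto intro: integrable_continuous_real continuous_on_subset)
  qed
  note kernel = inverse_sqrt_plus_inverse_square_integral[OF r L, of "H * r" "2 * S * r\<^sup>2"]
  have "cmod (integral {0..L} D)
      \<le> integral {0..L} (\<lambda>s. H * r / sqrt (s + r) + 2 * S * r\<^sup>2 / (s + r)\<^sup>2)"
    using norm_hypot_reflection_le[OF _ r holder g_le] kernel
    by (intro integral_norm_bound_integral[OF D_int]) (auto simp: D_def \<rho>_def norm_mult)
  also have "\<dots> = 2 * (H * r) * (sqrt (L + r) - sqrt r) + 2 * S * r\<^sup>2 * (1 / r - 1 / (L + r))"
    using kernel by (simp add: integral_unique)
  also have "\<dots> \<le> 2 * H * r * sqrt L + 2 * S * r"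
  proof (rule add_mono)
    have "sqrt (L + r) \<le> sqrt L + sqrt r"
      by (rule real_le_lsqrt) (use L r in \<open>auto simp: power2_eq_square algebra_simps\<close>)
    then show "2 * (H * r) * (sqrt (L + r) - sqrt r) \<le> 2 * H * r * sqrt L"
      using H r by (simp add: mult_left_mono)
    have "2 * S * r\<^sup>2 * (1 / r - 1 / (L + r)) \<le> 2 * S * r\<^sup>2 * (1 / r)"
      using S L r by (intro mult_left_mono) auto
    then show "2 * S * r\<^sup>2 * (1 / r - 1 / (L + r)) \<le> 2 * S * r"
      using r by (simp add: power2_eq_square)
  qed
  finally show ?thesis by (simp only: D_def[abs_def] \<rho>_def)
qed

lemma chirp_integral_bound:
  fixes g :: "real \<Rightarrow> complex"
  assumes a: "0 < a" and L: "0 \<le> L"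
    and holder: "\<And>x y. cmod (g x - g y) \<le> H * \<bar>x - y\<bar> powr (1/2)"
    and g_vanish: "\<And>s. L \<le> s \<Longrightarrow> g s = 0"
  shows "cmod (integral {0..L} (\<lambda>s. g s * chirp a s)) \<le> 3 * sqrt (4 * pi * a) * H * sqrt L"
proof -
  define r where "r = sqrt (4 * pi * a)"
  have r: "0 < r" using a by (simp add: r_def)
  have H: "0 \<le> H" by (rule holder_const_nonneg[OF holder])
  have g_cont: "continuous_on UNIV g" by (rule holder_continuous[OF _ holder]) simp
  have g_le: "cmod (g s) \<le> H * sqrt L" if "0 \<le> s" for s
  proof (cases "s \<le> L")
    case True
    have "cmod (g s) = cmod (g s - g L)" by (simp add: g_vanish)
    also have "\<dots> \<le> H * sqrt (L - s)" using holder[of s L] True by (simp add: powr_half_sqrt)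
    also have "\<dots> \<le> H * sqrt L" using that H by (intro mult_left_mono) auto
    finally show ?thesis .
  qed (use H L g_vanish in simp)
  have head: "cmod (integral {0..r} (\<lambda>s. g s * chirp a s)) \<le> r * (H * sqrt L)"
    using integral_bound[of 0 r "\<lambda>s. g s * chirp a s" "H * sqrt L"] g_le r
    by (simp add: norm_mult continuous_on_subset[OF g_cont] continuous_intros mult.commute)
  have tail: "cmod (integral {0..L} (\<lambda>s. (g s - of_real (s / sqrt (s\<^sup>2 + r\<^sup>2)) * g (sqrt (s\<^sup>2 + r\<^sup>2)))
                                      * chirp a s))
              \<le> 2 * H * r * sqrt L + 2 * (H * sqrt L) * r"
    by (rule norm_integral_hypot_reflection_le[OF r L holder g_le])
  have "2 * cmod (integral {0..L} (\<lambda>s. g s * chirp a s))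
      = cmod (2 * integral {0..L} (\<lambda>s. g s * chirp a s))"
    by (simp add: norm_mult)
  also have "\<dots> \<le> r * (H * sqrt L) + (2 * H * r * sqrt L + 2 * (H * sqrt L) * r)"
    by (subst chirp_integral_fold[OF a L g_cont g_vanish, folded r_def])
      (rule norm_triangle_le[OF add_mono[OF head tail]] | assumption)+
  finally have "2 * cmod (integral {0..L} (\<lambda>s. g s * chirp a s)) \<le> 5 * (r * H * sqrt L)"
    by (simp add: algebra_simps)
  moreover have "0 \<le> r * H * sqrt L" using H L r by simp
  ultimately show ?thesis unfolding r_def[symmetric] by (simp add: algebra_simps)
qed

lemma lborel_integral_eq_integral_Icc:
  fixes F :: "real \<Rightarrow> 'a::euclidean_space"
  assumes "continuous_on UNIV F" and "\<And>t. t \<notin> {p..q} \<Longrightarrow> F t = 0"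
  shows "(LINT t|lborel. F t) = integral {p..q} F"
proof -
  have "F = (\<lambda>t. indicator {p..q} t *\<^sub>R F t)"
    using assms(2) by (auto simp: indicator_def fun_eq_iff)
  moreover have "integrable lborel (\<lambda>t. indicator {p..q} t *\<^sub>R F t)"
    by (rule borel_integrable_compact) (auto intro: continuous_on_subset[OF assms(1)])
  ultimately have "integrable lborel F" by simp
  then have "(LINT t|lborel. F t) = integral UNIV F" by (simp add: integral_lborel)
  also have "\<dots> = integral UNIV (\<lambda>t. if t \<in> {p..q} then F t else 0)"
    by (rule arg_cong[where f = "integral UNIV"]) (auto simp: fun_eq_iff assms(2))
  also have "\<dots> = integral {p..q} F" by (rule integral_restrict_UNIV)
  finally show ?thesis .
qed

lemma lborel_integral_split_at:
  fixes F :: "real \<Rightarrow> 'a::euclidean_space"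
  assumes F: "continuous_on UNIV F" and L: "0 \<le> L"
    and F_vanish: "\<And>t. t \<notin> {x - L..x + L} \<Longrightarrow> F t = 0"
  shows "(LINT t|lborel. F t) = integral {0..L} (\<lambda>s. F (x - s)) + integral {0..L} (\<lambda>s. F (x + s))"
proof -
  have shifted_cont: "continuous_on UNIV (\<lambda>s. F (x + s))"
    by (rule continuous_on_compose2[OF F]) (auto intro!: continuous_intros)
  have "(LINT t|lborel. F t) = integral {x - L..x + L} F"
    by (rule lborel_integral_eq_integral_Icc[OF F F_vanish])
  also have "\<dots> = integral {-L..L} (\<lambda>s. F (x + s))"
    using integral_shift_Icc_real[of "-L" L F x] by (simp add: o_def algebra_simps)
  also have "\<dots> = integral {-L..0} (\<lambda>s. F (x + s)) + integral {0..L} (\<lambda>s. F (x + s))"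
    using L by (intro Henstock_Kurzweil_Integration.integral_combine[symmetric]
                  integrable_continuous_real continuous_on_subset[OF shifted_cont]) auto
  also have "integral {-L..0} (\<lambda>s. F (x + s)) = integral {0..L} (\<lambda>s. F (x - s))"
    using Henstock_Kurzweil_Integration.integral_reflect_real[of 0 "-L" "\<lambda>s. F (x + s)"] by simp
  finally show ?thesis .
qed

lemma norm_chirp_convolution_le:
  fixes f :: "real \<Rightarrow> complex"
  assumes a: "0 < a"
    and holder: "\<And>x y. cmod (f x - f y) \<le> H * \<bar>x - y\<bar> powr (1/2)"
    and f_vanish: "\<And>t. t \<notin> {c<..<d} \<Longrightarrow> f t = 0"
  shows "cmod (LINT t|lborel. f t * cis (- ((x - t)\<^sup>2 / (4 * a))))
           \<le> 6 * sqrt (4 * pi * a) * H * sqrt (\<bar>c - x\<bar> + \<bar>d - x\<bar>)"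
proof -
  define L where "L = \<bar>c - x\<bar> + \<bar>d - x\<bar>"
  define F where "F t = f t * cis (- ((x - t)\<^sup>2 / (4 * a)))" for t
  have L: "0 \<le> L" by (simp add: L_def)
  have "(LINT t|lborel. F t) = integral {0..L} (\<lambda>s. F (x - s)) + integral {0..L} (\<lambda>s. F (x + s))"
  proof (rule lborel_integral_split_at[OF _ L])
    have "continuous_on UNIV f" by (rule holder_continuous[OF _ holder]) simp
    then show "continuous_on UNIV F" unfolding F_def divide_inverse by (intro continuous_intros)
    show "F t = 0" if "t \<notin> {x - L..x + L}" for t
    proof -
      have "t \<notin> {c<..<d}" using that by (auto simp: L_def)
      then show ?thesis by (simp add: F_def f_vanish)
    qed
  qed
  also have "(\<lambda>s. F (x - s)) = (\<lambda>s. f (x - s) * chirp a s)" by (simp add: F_def chirp_def)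
  also have "(\<lambda>s. F (x + s)) = (\<lambda>s. f (x + s) * chirp a s)" by (simp add: F_def chirp_def)
  also have "cmod (integral {0..L} (\<lambda>s. f (x - s) * chirp a s) + integral {0..L} (\<lambda>s. f (x + s) * chirp a s))
      \<le> 3 * sqrt (4 * pi * a) * H * sqrt L + 3 * sqrt (4 * pi * a) * H * sqrt L"
  proof (rule norm_triangle_le[OF add_mono])
    show "cmod (integral {0..L} (\<lambda>s. f (x - s) * chirp a s)) \<le> 3 * sqrt (4 * pi * a) * H * sqrt L"
    proof (rule chirp_integral_bound[OF a L])
      show "cmod (f (x - s) - f (x - s')) \<le> H * \<bar>s - s'\<bar> powr (1/2)" for s s'
        using holder[of "x - s" "x - s'"] by (simp add: abs_minus_commute)
      show "f (x - s) = 0" if "L \<le> s" for s using that by (intro f_vanish) (auto simp: L_def)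
    qed
    show "cmod (integral {0..L} (\<lambda>s. f (x + s) * chirp a s)) \<le> 3 * sqrt (4 * pi * a) * H * sqrt L"
    proof (rule chirp_integral_bound[OF a L])
      show "cmod (f (x + s) - f (x + s')) \<le> H * \<bar>s - s'\<bar> powr (1/2)" for s s'
        using holder[of "x + s" "x + s'"] by simp
      show "f (x + s) = 0" if "L \<le> s" for s using that by (intro f_vanish) (auto simp: L_def)
    qed
  qed
  finally show ?thesis by (simp add: F_def L_def algebra_simps)
qed

lemma norm_L_op_le:
  fixes f :: "real \<Rightarrow> complex"
  assumes a: "0 \<le> a"
    and holder: "\<And>x y. cmod (f x - f y) \<le> H * \<bar>x - y\<bar> powr (1/2)"
    and f_vanish: "\<And>t. t \<notin> {c<..<d} \<Longrightarrow> f t = 0"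
  shows "cmod (L_op b a f u) \<le> 6 * H * sqrt (\<bar>c - b a * u\<bar> + \<bar>d - b a * u\<bar>)"
proof -
  define x where "x = b a * u"
  have H: "0 \<le> H" by (rule holder_const_nonneg[OF holder])
  show ?thesis
  proof (cases "a = 0")
    case True
    have "cmod (f x) = cmod (f x - f d)" by (simp add: f_vanish)
    also have "\<dots> \<le> H * sqrt \<bar>x - d\<bar>" using holder[of x d] by (simp add: powr_half_sqrt)
    also have "\<dots> \<le> 6 * H * sqrt (\<bar>c - x\<bar> + \<bar>d - x\<bar>)" using H by (intro mult_mono) auto
    finally show ?thesis using True by (simp add: L_op_def x_def)
  next
    case False
    with a have a: "0 < a" by simp
    define k where "k = complex_of_real (1 / sqrt (2 * pi)) * cis (pi / 4) / complex_of_real (sqrt (2 * a))"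
    have "cmod k = 1 / sqrt (4 * pi * a)"
      using a by (simp add: k_def norm_mult norm_divide real_sqrt_mult[symmetric])
    moreover have "L_op b a f u = k * (LINT t|lborel. f t * cis (- ((x - t)\<^sup>2 / (4 * a))))"
      using False by (simp add: L_op_def x_def k_def)
    ultimately have "cmod (L_op b a f u)
        = 1 / sqrt (4 * pi * a) * cmod (LINT t|lborel. f t * cis (- ((x - t)\<^sup>2 / (4 * a))))"
      by (simp only: norm_mult)
    also have "\<dots> \<le> 1 / sqrt (4 * pi * a) * (6 * sqrt (4 * pi * a) * H * sqrt (\<bar>c - x\<bar> + \<bar>d - x\<bar>))"
      using a by (intro mult_left_mono norm_chirp_convolution_le[OF a holder f_vanish]) auto
    also have "\<dots> = 6 * H * sqrt (\<bar>c - x\<bar> + \<bar>d - x\<bar>)" using a by simp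
    finally show ?thesis by (simp add: x_def)
  qed
qed

definition holder_seminorm :: "real \<Rightarrow> (real \<Rightarrow> complex) \<Rightarrow> real" where
  "holder_seminorm s f =
     (SUP p \<in> {p::real\<times>real. fst p \<noteq> snd p}.
        cmod (f (fst p) - f (snd p)) / \<bar>fst p - snd p\<bar> powr s)"

lemma holder_norm_eq: "holder_norm s f = (SUP x. cmod (f x)) + holder_seminorm s f"
  by (simp add: holder_norm_def holder_seminorm_def)

lemma holder_c_le_seminorm:
  assumes "holder_c s c d f"
  shows "cmod (f x - f y) \<le> holder_seminorm s f * \<bar>x - y\<bar> powr s"
proof (cases "x = y")
  case False
  from assms obtain K where K: "\<And>x y. cmod (f x - f y) \<le> K * \<bar>x - y\<bar> powr s"
    unfolding holder_c_def by blast
  define q where "q p = cmod (f (fst p) - f (snd p)) / \<bar>fst p - snd p\<bar> powr s" for p :: "real \<times> real"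
  have "q p \<le> K" if "fst p \<noteq> snd p" for p
    using K[of "fst p" "snd p"] that by (simp add: q_def pos_divide_le_eq)
  then have "bdd_above (q ` {p. fst p \<noteq> snd p})" by (intro bdd_aboveI2) auto
  then have "q (x, y) \<le> holder_seminorm s f"
    using False unfolding holder_seminorm_def q_def[symmetric] by (intro cSUP_upper) auto
  then show ?thesis using False by (simp add: q_def pos_divide_le_eq)
qed simp

lemma holder_seminorm_le_holder_norm:
  assumes f: "holder_c s c d f" and s: "0 \<le> s"
  shows "holder_seminorm s f \<le> holder_norm s f"
proof -
  let ?Q = "holder_seminorm s f"
  have Q: "0 \<le> ?Q" by (rule holder_const_nonneg[OF holder_c_le_seminorm[OF f]])
  have "cmod (f x) \<le> ?Q * \<bar>d - c\<bar> powr s" for x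
  proof (cases "x \<in> {c<..<d}")
    case True
    have "cmod (f x) = cmod (f x - f c)" using f by (simp add: holder_c_def)
    also have "\<dots> \<le> ?Q * \<bar>x - c\<bar> powr s" by (rule holder_c_le_seminorm[OF f])
    also have "\<dots> \<le> ?Q * \<bar>d - c\<bar> powr s" using True Q s by (intro mult_left_mono powr_mono2) auto
    finally show ?thesis .
  qed (use f Q in \<open>simp add: holder_c_def\<close>)
  then have "bdd_above (range (\<lambda>x. cmod (f x)))" by (intro bdd_aboveI2) auto
  then have "0 \<le> (SUP x. cmod (f x))" using cSUP_upper[of 0 UNIV] norm_ge_zero order_trans by blast
  then show ?thesis by (simp add: holder_norm_eq)
qed

lemma continuous_on_L_op:
  fixes f :: "real \<Rightarrow> complex"
  assumes f: "continuous_on UNIV f" and f_vanish: "\<And>t. t \<notin> {c..d} \<Longrightarrow> f t = 0"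
  shows "continuous_on UNIV (L_op b a f)"
proof (cases "a = 0")
  case True
  then show ?thesis unfolding L_op_def
    by (simp add: continuous_on_compose2[OF f] continuous_intros)
next
  case False
  define F where "F u t = f t * cis (- ((b a * u - t)\<^sup>2 / (4 * a)))" for u t
  have F_cont: "continuous_on UNIV (\<lambda>p::real \<times> real. F (fst p) (snd p))"
    unfolding F_def by (intro continuous_intros continuous_on_compose2[OF f]) (use False in auto)
  have "(LINT t|lborel. F u t) = integral (cbox c d) (F u)" for u
  proof -
    have "continuous_on UNIV (F u)"
      using continuous_on_compose2[OF F_cont, of UNIV "Pair u"] by (simp add: continuous_intros)
    then show ?thesis unfolding cbox_interval
      by (rule lborel_integral_eq_integral_Icc) (simp add: F_def f_vanish)
  qed
  then have "L_op b a f = (\<lambda>u. complex_of_real (1 / sqrt (2 * pi)) * cis (pi / 4)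
                               / complex_of_real (sqrt (2 * a)) * integral (cbox c d) (F u))"
    using False by (simp add: L_op_def F_def fun_eq_iff)
  moreover have "continuous_on (UNIV \<times> cbox c d) (\<lambda>(u, t). F u t)"
    using continuous_on_subset[OF F_cont] by (simp add: split_beta')
  ultimately show ?thesis by (simp only:) (intro continuous_intros integral_continuous_on_param)
qed

lemma borel_measurable_SUP_norm_continuous:
  fixes h :: "'i \<Rightarrow> real \<Rightarrow> 'a::real_normed_vector"
  assumes "\<And>i. i \<in> I \<Longrightarrow> continuous_on UNIV (h i)"
  shows "(\<lambda>u. SUP i\<in>I. ereal (norm (h i u))) \<in> borel_measurable lborel"
proof (rule borel_measurableI_greater)
  fix y :: ereal
  have "open {u. y < ereal (norm (h i u))}" if "i \<in> I" for i
  proof (cases y)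
    case (real z)
    have "open {u. z < norm (h i u)}"
      by (rule open_Collect_less) (intro continuous_intros assms that)+
    then show ?thesis using real by simp
  qed auto
  moreover have "{u \<in> space lborel. y < (SUP i\<in>I. ereal (norm (h i u)))}
      = (\<Union>i\<in>I. {u. y < ereal (norm (h i u))})"
    by (auto simp: less_SUP_iff)
  ultimately show "{u \<in> space lborel. y < (SUP i\<in>I. ereal (norm (h i u)))} \<in> sets lborel"
    by (simp add: open_UN)
qed

lemma borel_measurable_SUP_L_op:
  fixes f :: "real \<Rightarrow> complex"
  assumes "0 < s" and f: "holder_c s c d f"
  shows "(\<lambda>u. SUP a\<in>A. ereal (cmod (L_op b a f u))) \<in> borel_measurable lborel"
proof (intro borel_measurable_SUP_norm_continuous continuous_on_L_op)
  show "continuous_on UNIV f" by (rule holder_continuous[OF assms(1) holder_c_le_seminorm[OF f]])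
  show "f t = 0" if "t \<notin> {c..d}" for t using f that by (auto simp: holder_c_def)
qed

lemma norm_L_op_le_holder_norm:
  fixes f :: "real \<Rightarrow> complex"
  assumes f: "holder_c (1/2) c d f" and a: "0 \<le> a" and b: "\<bar>b a\<bar> \<le> M"
    and u: "\<bar>u\<bar> \<le> R" and R: "\<bar>c\<bar> + \<bar>d\<bar> \<le> R"
  shows "cmod (L_op b a f u) \<le> 6 * sqrt (1 + 2 * M) * (1 + \<bar>d - c\<bar>) * R powr (1/2) * holder_norm (1/2) f"
proof -
  let ?x = "b a * u" and ?Q = "holder_seminorm (1/2) f" and ?N = "holder_norm (1/2) f"
  have Q: "0 \<le> ?Q" by (rule holder_const_nonneg[OF holder_c_le_seminorm[OF f]])
  have QN: "?Q \<le> (1 + \<bar>d - c\<bar>) * ?N"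
  proof -
    have "?Q \<le> ?N" by (rule holder_seminorm_le_holder_norm[OF f]) simp
    moreover from this Q have "0 \<le> \<bar>d - c\<bar> * ?N" by simp
    ultimately show ?thesis by (simp add: algebra_simps)
  qed
  have "\<bar>?x\<bar> \<le> M * R" unfolding abs_mult using b u by (intro mult_mono) auto
  then have "\<bar>c - ?x\<bar> + \<bar>d - ?x\<bar> \<le> (1 + 2 * M) * R" using R by (simp add: algebra_simps)
  then have L: "sqrt (\<bar>c - ?x\<bar> + \<bar>d - ?x\<bar>) \<le> sqrt (1 + 2 * M) * sqrt R"
    by (simp add: real_sqrt_mult[symmetric])
  have "cmod (L_op b a f u) \<le> 6 * ?Q * sqrt (\<bar>c - ?x\<bar> + \<bar>d - ?x\<bar>)"
    using f by (intro norm_L_op_le[OF a holder_c_le_seminorm[OF f]]) (simp add: holder_c_def)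
  also have "\<dots> \<le> 6 * ((1 + \<bar>d - c\<bar>) * ?N) * (sqrt (1 + 2 * M) * sqrt R)"
    using Q QN L by (intro mult_mono) auto
  also have "\<dots> = 6 * sqrt (1 + 2 * M) * (1 + \<bar>d - c\<bar>) * R powr (1/2) * ?N"
    using R by (simp add: powr_half_sqrt)
  finally show ?thesis .
qed

lemma lipschitz_on_Icc_abs_le:
  fixes b :: "real \<Rightarrow> real"
  assumes "K-lipschitz_on {p..q} b" and "a \<in> {p..q}"
  shows "\<bar>b a\<bar> \<le> \<bar>b p\<bar> + K * (q - p)"
proof -
  have "\<bar>b a - b p\<bar> \<le> K * (a - p)"
    using lipschitz_onD[OF assms, of p] assms(2) by (simp add: dist_real_def)
  also have "\<dots> \<le> K * (q - p)"
    using assms lipschitz_on_nonneg[OF assms(1)] by (intro mult_left_mono) auto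
  finally show ?thesis by linarith
qed

theorem theorem6:
  fixes c1 c d :: real and b :: "real \<Rightarrow> real"
  assumes "c1 > 0"
    and "\<exists>K. K-lipschitz_on {0..c1} b"
    and "b 0 = 1"
    and "c < d"
  shows "\<exists>C2 > 0. \<forall>R > \<bar>c\<bar> + \<bar>d\<bar>. \<forall>f. holder_c (1/2) c d f \<longrightarrow>
           esssup (restrict_space lborel {-R..R})
             (\<lambda>u. SUP a \<in> {0..c1}. ereal (cmod (L_op b a f u)))
           \<le> ereal (C2 * (1 + \<bar>d - c\<bar>) * R powr (1/2) * holder_norm (1/2) f)"
proof -
  from assms(2) obtain K where lip: "K-lipschitz_on {0..c1} b" by blast
  define M where "M = 1 + K * c1"
  have b_le: "\<bar>b a\<bar> \<le> M" if "a \<in> {0..c1}" for a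
    using lipschitz_on_Icc_abs_le[OF lip that] assms(3) by (simp add: M_def)
  have "0 \<le> M" using lipschitz_on_nonneg[OF lip] assms(1) by (simp add: M_def)
  then show ?thesis
    using b_le
    by (intro exI[of _ "6 * sqrt (1 + 2 * M)"] conjI allI impI esssup_I AE_I2 SUP_least
          measurable_restrict_space1 borel_measurable_SUP_L_op[of "1/2"])
      (auto simp: space_restrict_space intro!: norm_L_op_le_holder_norm)
qed

end
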